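(* There exists a function $I(y,y')$, smooth on $\{(y,y'):0<y'<y\}$, such that $$G_{L}(y,y')=\mathbf{1}_{(0,\infty)}(y-y')\frac{Q(y)}{Q(y')}I(y,y'),\qquad G_{iL}(y,y')=\mathbf{1}_{(0,\infty)}(y-y')\frac{Q(y)}{Q(y')}$$ are the outgoing Green's functions of $L_Q$ and of $i^{-1}L_Qi$ respectively (acting on real-valued functions), i.e. $L_Q(G_L(\cdot,y'))=\delta_{y'}$, $i^{-1}L_Qi(G_{iL}(\cdot,y'))=\delta_{y'}$, and both vanish for $0<y<y'$; and $I$ has the following properties. (1) For every integer $k\ge0$ and $0<y'<y$: $|I(y,y')|\lesssim 1+\langle y'\rangle^{-2}\log\big(2+\frac{\langle y\rangle}{\langle y'\rangle}\big)$; $|y\partial_yI(y,y')|\lesssim \frac{y-y'}{y}\min\{\frac{y^2}{\langle y\rangle^2},\langle y'\rangle^{-2}\}$; for $k\ge2$, $|(y\partial_y)^kI(y,y')|\lesssim_k\frac{y^2}{1+y^4}\big(1+\langle y'\rangle^{-2}\log\big(2+\frac{\langle y\rangle}{\langle y'\rangle}\big)\big)$. (2) $\lim_{y-y'\to0^+}I(y,y')=1$ and $\lim_{y-y'\to0^+}y\partial_yI(y,y')=0$. Moreover, setting $I^{(k)}(y)=\lim_{y'\to y^-}(y\partial_y)^kI(y,y')$, for all $k\ge2$ and $\ell\ge0$ one has $|I^{(k)}(y)|_\ell\lesssim_{k,\ell}\frac{y^2}{1+y^4}$.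
   Context: $Q(y)=\frac{\sqrt8}{1+y^2}$, $A_\theta[Q](y)=-\frac{2y^2}{1+y^2}$, $\langle a\rangle=(1+a^2)^{1/2}$. For real-valued $u$ on $(0,\infty)$: $L_Qu=\partial_yu-\frac{A_\theta[Q]}{y}u+\frac{Q}{y}\int_0^yQu\,y'dy'$ and $i^{-1}L_Q(iu)=\partial_yu-\frac{A_\theta[Q]}{y}u$. The outgoing Green's function of a linear operator $T$ acting on real functions of $y\in(0,\infty)$ is $G(y,y')$ with $T(G(\cdot,y'))=\delta_{y'}$ and $G(y,y')=0$ for $0<y<y'$. For a function $f$ and integer $\ell\ge0$, $|f|_\ell(y)=\sup_{0\le j\le\ell}|y^j\partial_y^jf(y)|$. *)

theory Defs
  imports "HOL-Analysis.Analysis"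
begin

definition Q :: "real \<Rightarrow> real" where
  "Q y = sqrt 8 / (1 + y\<^sup>2)"

definition A_theta :: "real \<Rightarrow> real" where
  "A_theta y = - (2 * y\<^sup>2) / (1 + y\<^sup>2)"

(* Japanese bracket  <a> = (1+a^2)^(1/2) *)
definition jbr :: "real \<Rightarrow> real" where
  "jbr a = sqrt (1 + a\<^sup>2)"

fun higher_diff_on :: "nat \<Rightarrow> 'a::real_normed_vector set \<Rightarrow> ('a \<Rightarrow> 'b::real_normed_vector) \<Rightarrow> bool" where
  "higher_diff_on 0 S f \<longleftrightarrow> continuous_on S f"
| "higher_diff_on (Suc n) S f \<longleftrightarrow>
     (\<forall>x\<in>S. f differentiable (at x)) \<and>
     (\<forall>v. higher_diff_on n S (\<lambda>x. frechet_derivative f (at x) v))"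

definition smooth_on :: "'a::real_normed_vector set \<Rightarrow> ('a \<Rightarrow> 'b::real_normed_vector) \<Rightarrow> bool" where
  "smooth_on S f \<longleftrightarrow> (\<forall>n. higher_diff_on n S f)"

definition test_function :: "(real \<Rightarrow> real) \<Rightarrow> bool" where
  "test_function \<phi> \<longleftrightarrow> smooth_on UNIV \<phi> \<and>
     (\<exists>a b. 0 < a \<and> a \<le> b \<and> (\<forall>y. y \<notin> {a..b} \<longrightarrow> \<phi> y = 0))"

definition loc_int :: "(real \<Rightarrow> real) \<Rightarrow> bool" where
  "loc_int u \<longleftrightarrow> (\<forall>a b. 0 < a \<longrightarrow> set_integrable lborel {a..b} u)"

(* <L_Q u, \<phi>> for the distribution L_Q u, where
   L_Q u = \<partial>_y u - (A_\<theta>[Q]/y) u + (Q/y) \<integral>_0^y Q u y' dy' *)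
definition LQ_pair :: "(real \<Rightarrow> real) \<Rightarrow> (real \<Rightarrow> real) \<Rightarrow> real" where
  "LQ_pair u \<phi> =
     (LINT y:{0<..}|lborel.
        u y * (- deriv \<phi> y) - A_theta y / y * u y * \<phi> y
        + Q y / y * \<phi> y * (LINT s:{0<..y}|lborel. Q s * u s * s))"

(* <i^{-1} L_Q (i u), \<phi>> where i^{-1} L_Q (i u) = \<partial>_y u - (A_\<theta>[Q]/y) u *)
definition iLQi_pair :: "(real \<Rightarrow> real) \<Rightarrow> (real \<Rightarrow> real) \<Rightarrow> real" where
  "iLQi_pair u \<phi> =
     (LINT y:{0<..}|lborel. u y * (- deriv \<phi> y) - A_theta y / y * u y * \<phi> y)"

definition outgoing_green :: "((real \<Rightarrow> real) \<Rightarrow> (real \<Rightarrow> real) \<Rightarrow> real) \<Rightarrow> (real \<Rightarrow> real \<Rightarrow> real) \<Rightarrow> bool" where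
  "outgoing_green T G \<longleftrightarrow>
     (\<forall>y'>0. (\<forall>y. 0 < y \<and> y < y' \<longrightarrow> G y y' = 0) \<and>
             loc_int (\<lambda>y. G y y') \<and>
             (\<forall>\<phi>. test_function \<phi> \<longrightarrow> T (\<lambda>y. G y y') \<phi> = \<phi> y'))"

definition ydy :: "(real \<Rightarrow> real \<Rightarrow> real) \<Rightarrow> real \<Rightarrow> real \<Rightarrow> real" where
  "ydy F y y' = y * deriv (\<lambda>t. F t y') y"

definition seminorm_l :: "nat \<Rightarrow> (real \<Rightarrow> real) \<Rightarrow> real \<Rightarrow> real" where
  "seminorm_l l f y = Max ((\<lambda>j. \<bar>y ^ j * (deriv ^^ j) f y\<bar>) ` {0..l})"

definition I_diag :: "(real \<Rightarrow> real \<Rightarrow> real) \<Rightarrow> nat \<Rightarrow> real \<Rightarrow> real" where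
  "I_diag I k y = Lim (at_left y) (\<lambda>y'. (ydy ^^ k) I y y')"

definition indic_pos :: "real \<Rightarrow> real" where
  "indic_pos t = (if 0 < t then 1 else 0)"

end

(*
  Write u = <y>^(-2) = 1/(1+y^2), so that y d/dy u = -2 u (1 - u).  The kernel I is explicit:
  together with J = y d/dy I it solves the first order system y d/dy J = -8 u (1 - u) I with
  I = 1 and J = 0 on the diagonal.  Since Q' = (A_theta[Q]/y) Q and Q^2 y = 8 u (1 - u) / y, for
  y > y' the nonlocal term of L_Q applied to Q(y) I(y,y') / Q(y') equals -Q J / (y Q(y')), which
  cancels the local part Q (d/dy I) / Q(y') = Q J / (y Q(y')).  The pairing with a test function
  phi is therefore the integral over (y', oo) of -d/dy (Q I phi) / Q(y'), that is phi(y').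

  Iterating the system gives (y d/dy)^k I = P_k(u) I + R_k(u) J with polynomials P_k, R_k, both
  divisible by X (1 - X) once k >= 2; as u (1 - u) <= y^2/(1+y^4), this gives the bounds on the
  higher Euler derivatives.  On the diagonal I^(k) = P_k(u), and y^j d^j/dy^j of a polynomial in u
  is again a polynomial in u with the same divisibility.
*)
theory Submission
  imports Defs "HOL-Computational_Algebra.Polynomial"
begin

section \<open>Calculus of higher differentiability\<close>

lemma higher_diff_on_cong:
  assumes "open S" "\<And>x. x \<in> S \<Longrightarrow> f x = g x"
  shows "higher_diff_on n S f = higher_diff_on n S g"
  using assms(2)
proof (induction n arbitrary: f g)
  case 0
  then show ?case using continuous_on_cong by auto
next
  case (Suc n)
  have diff_iff: "f differentiable (at x) \<longleftrightarrow> g differentiable (at x)" if "x \<in> S" for x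
    using has_derivative_transform_within_open[OF _ assms(1) that] Suc.prems that
    unfolding differentiable_def by metis
  have "frechet_derivative f (at x) = frechet_derivative g (at x)" if "x \<in> S" for x
  proof (cases "f differentiable (at x)")
    case True
    then have "(g has_derivative frechet_derivative f (at x)) (at x)"
      using has_derivative_transform_within_open[OF _ assms(1) that] Suc.prems
      by (metis frechet_derivative_works)
    then show ?thesis by (metis frechet_derivative_at)
  next
    case False
    then show ?thesis
      using diff_iff[OF that] by (simp add: frechet_derivative_def differentiable_def)
  qed
  then show ?case
    using Suc.IH[of "\<lambda>x. frechet_derivative f (at x) v" "\<lambda>x. frechet_derivative g (at x) v" for v]
      diff_iff by auto
qed

lemma higher_diff_on_SucD: "higher_diff_on (Suc n) S f \<Longrightarrow> higher_diff_on n S f"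
proof (induction n arbitrary: f)
  case 0
  then show ?case
    by (auto intro!: continuous_at_imp_continuous_on differentiable_imp_continuous_within)
qed auto

lemma higher_diff_on_SucI:
  assumes "open S" "\<And>x. x \<in> S \<Longrightarrow> (f has_derivative D x) (at x)"
    and "\<And>v. higher_diff_on n S (\<lambda>x. D x v)"
  shows "higher_diff_on (Suc n) S f"
proof -
  have "frechet_derivative f (at x) = D x" if "x \<in> S" for x
    using assms(2)[OF that] by (rule frechet_derivative_at[symmetric])
  then have "higher_diff_on n S (\<lambda>x. frechet_derivative f (at x) v)" for v
    using assms(3)[of v] higher_diff_on_cong[OF assms(1), of "\<lambda>x. frechet_derivative f (at x) v"]
    by simp
  moreover have "\<forall>x\<in>S. f differentiable (at x)"
    using assms(2) by (auto simp: differentiable_def)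
  ultimately show ?thesis by simp
qed

lemma higher_diff_on_const: "higher_diff_on n S (\<lambda>x. c)"
proof (induction n arbitrary: c)
  case (Suc n)
  have "frechet_derivative (\<lambda>x. c) (at x) = (\<lambda>h. 0)" for x :: 'a
    by (metis frechet_derivative_at has_derivative_const)
  then show ?case using Suc by simp
qed simp

lemma higher_diff_on_bounded_linear:
  assumes "bounded_linear f"
  shows "higher_diff_on n S f"
proof (cases n)
  case 0
  then show ?thesis using assms by (simp add: linear_continuous_on)
next
  case (Suc m)
  have "frechet_derivative f (at x) = f" for x
    by (metis assms bounded_linear_imp_has_derivative frechet_derivative_at)
  then show ?thesis
    using Suc assms higher_diff_on_const by (auto intro: bounded_linear_imp_differentiable)
qed

lemma higher_diff_on_add:
  assumes "open S" "higher_diff_on n S f" "higher_diff_on n S g"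
  shows "higher_diff_on n S (\<lambda>x. f x + g x)"
  using assms(2,3)
proof (induction n arbitrary: f g)
  case (Suc n)
  show ?case
  proof (rule higher_diff_on_SucI[OF assms(1)])
    fix x assume "x \<in> S"
    then show "((\<lambda>x. f x + g x) has_derivative
        (\<lambda>v. frechet_derivative f (at x) v + frechet_derivative g (at x) v)) (at x)"
      using Suc.prems by (intro has_derivative_add) (auto simp: frechet_derivative_works)
  qed (use Suc in auto)
qed (auto intro: continuous_on_add)

lemma higher_diff_on_mult:
  fixes f g :: "'a::real_normed_vector \<Rightarrow> real"
  assumes "open S" "higher_diff_on n S f" "higher_diff_on n S g"
  shows "higher_diff_on n S (\<lambda>x. f x * g x)"
  using assms(2,3)
proof (induction n arbitrary: f g)
  case (Suc n)
  show ?case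
  proof (rule higher_diff_on_SucI[OF assms(1)])
    fix x assume "x \<in> S"
    then show "((\<lambda>x. f x * g x) has_derivative
        (\<lambda>v. f x * frechet_derivative g (at x) v + frechet_derivative f (at x) v * g x)) (at x)"
      using Suc.prems by (intro has_derivative_mult) (auto simp: frechet_derivative_works)
  next
    fix v
    show "higher_diff_on n S
        (\<lambda>x. f x * frechet_derivative g (at x) v + frechet_derivative f (at x) v * g x)"
      using Suc.prems higher_diff_on_SucD by (intro higher_diff_on_add[OF assms(1)] Suc.IH) auto
  qed
qed (auto intro: continuous_on_mult)

lemma higher_diff_on_diff:
  fixes f g :: "'a::real_normed_vector \<Rightarrow> real"
  assumes "open S" "higher_diff_on n S f" "higher_diff_on n S g"
  shows "higher_diff_on n S (\<lambda>x. f x - g x)"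
  using higher_diff_on_add[OF assms(1,2) higher_diff_on_mult[OF assms(1) higher_diff_on_const assms(3)],
      of "-1"]
  by simp

lemma higher_diff_on_inverse:
  fixes f :: "'a::real_normed_vector \<Rightarrow> real"
  assumes "open S" "higher_diff_on n S f" "\<And>x. x \<in> S \<Longrightarrow> f x \<noteq> 0"
  shows "higher_diff_on n S (\<lambda>x. inverse (f x))"
  using assms(2,3)
proof (induction n arbitrary: f)
  case 0
  then show ?case by (auto intro!: continuous_on_inverse)
next
  case (Suc n)
  show ?case
  proof (rule higher_diff_on_SucI[OF assms(1)])
    fix x assume "x \<in> S"
    then show "((\<lambda>x. inverse (f x)) has_derivative
        (\<lambda>v. - (inverse (f x) * frechet_derivative f (at x) v * inverse (f x)))) (at x)"
      using Suc.prems by (intro Deriv.has_derivative_inverse) (auto simp: frechet_derivative_works)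
  next
    fix v
    have "higher_diff_on n S (\<lambda>x. inverse (f x))"
      using Suc.prems higher_diff_on_SucD by (intro Suc.IH) auto
    then have "higher_diff_on n S (\<lambda>x. (- 1) * (inverse (f x) * frechet_derivative f (at x) v * inverse (f x)))"
      using Suc.prems
      by (intro higher_diff_on_mult[OF assms(1)] higher_diff_on_const) auto
    then show "higher_diff_on n S (\<lambda>x. - (inverse (f x) * frechet_derivative f (at x) v * inverse (f x)))"
      by simp
  qed
qed

lemma higher_diff_on_ln:
  fixes f :: "'a::real_normed_vector \<Rightarrow> real"
  assumes "open S" "higher_diff_on n S f" "\<And>x. x \<in> S \<Longrightarrow> f x > 0"
  shows "higher_diff_on n S (\<lambda>x. ln (f x))"
proof (cases n)
  case 0
  then show ?thesis using assms by (auto intro!: continuous_on_ln simp: less_imp_neq[symmetric])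
next
  case (Suc m)
  show ?thesis unfolding Suc
  proof (rule higher_diff_on_SucI[OF assms(1)])
    fix x assume "x \<in> S"
    then show "((\<lambda>x. ln (f x)) has_derivative
        (\<lambda>v. frechet_derivative f (at x) v * inverse (f x))) (at x)"
      using assms Suc by (intro has_derivative_ln) (auto simp: frechet_derivative_works)
  next
    fix v
    show "higher_diff_on m S (\<lambda>x. frechet_derivative f (at x) v * inverse (f x))"
      using assms Suc higher_diff_on_SucD
      by (intro higher_diff_on_mult[OF assms(1)] higher_diff_on_inverse[OF assms(1)])
        (auto simp: less_imp_neq[symmetric])
  qed
qed

section \<open>The explicit kernel\<close>

lemma one_add_power2_pos [simp]: "0 < 1 + (y::real)\<^sup>2"
  by (simp add: add_pos_nonneg)

lemma one_add_power2_neq_zero [simp]: "1 + (y::real)\<^sup>2 \<noteq> 0"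
  using one_add_power2_pos[of y] by linarith

lemma jbr_sq: "(jbr a)\<^sup>2 = 1 + a\<^sup>2"
  unfolding jbr_def by simp

lemma jbr_pos: "0 < jbr a"
  unfolding jbr_def by simp

definition jbr_inv_sq :: "real \<Rightarrow> real" where
  "jbr_inv_sq y = 1 / (1 + y\<^sup>2)"

lemma jbr_inv_sq_eq: "jbr_inv_sq y = 1 / (jbr y)\<^sup>2"
  unfolding jbr_inv_sq_def jbr_sq ..

lemma jbr_inv_sq_pos: "0 < jbr_inv_sq y"
  unfolding jbr_inv_sq_def by simp

lemma jbr_inv_sq_le_one: "jbr_inv_sq y \<le> 1"
  unfolding jbr_inv_sq_def by simp

lemma one_minus_jbr_inv_sq: "1 - jbr_inv_sq y = y\<^sup>2 * jbr_inv_sq y"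
  unfolding jbr_inv_sq_def by (simp add: field_simps)

lemma jbr_inv_sq_mult_one_minus: "jbr_inv_sq y * (1 - jbr_inv_sq y) = y\<^sup>2 / (1 + y\<^sup>2)\<^sup>2"
  unfolding one_minus_jbr_inv_sq unfolding jbr_inv_sq_def by (simp add: power2_eq_square)

lemma two_jbr_inv_sq_minus_one: "2 * jbr_inv_sq y - 1 = (1 - y\<^sup>2) / (1 + y\<^sup>2)"
  unfolding jbr_inv_sq_def by (simp add: field_simps)

lemma jbr_inv_sq_mult_one_minus_le: "jbr_inv_sq y * (1 - jbr_inv_sq y) \<le> y\<^sup>2 / (1 + y ^ 4)"
  unfolding jbr_inv_sq_mult_one_minus
proof (rule divide_left_mono)
  show "1 + y ^ 4 \<le> (1 + y\<^sup>2)\<^sup>2"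
    by (simp add: power2_eq_square power4_eq_xxxx algebra_simps)
  show "0 < (1 + y\<^sup>2)\<^sup>2 * (1 + y ^ 4)"
    by (simp add: add_pos_nonneg)
qed simp

lemma has_real_derivative_jbr_inv_sq:
  assumes "y \<noteq> 0"
  shows "(jbr_inv_sq has_real_derivative - 2 * (jbr_inv_sq y * (1 - jbr_inv_sq y)) / y) (at y)"
proof -
  have "(jbr_inv_sq has_real_derivative - (2 * y) / (1 + y\<^sup>2)\<^sup>2) (at y)"
    unfolding jbr_inv_sq_def[abs_def]
    by (auto intro!: derivative_eq_intros) (simp add: field_simps power2_eq_square)
  also have "- (2 * y) / (1 + y\<^sup>2)\<^sup>2 = - 2 * (jbr_inv_sq y * (1 - jbr_inv_sq y)) / y"
    unfolding jbr_inv_sq_mult_one_minus using assms by (simp add: power2_eq_square)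
  finally show ?thesis .
qed

definition green_I :: "real \<Rightarrow> real \<Rightarrow> real" where
  "green_I y y' =
     (2 * jbr_inv_sq y - 1) * (2 * jbr_inv_sq y' - 1)
     + 4 * (jbr_inv_sq y' * (1 - jbr_inv_sq y'))
         * ((2 * jbr_inv_sq y - 1) * (ln y - ln y' - 1) + 2 * jbr_inv_sq y)"

definition green_J :: "real \<Rightarrow> real \<Rightarrow> real" where
  "green_J y y' =
     4 * (jbr_inv_sq y' * (1 - jbr_inv_sq y')) * (2 * jbr_inv_sq y - 1)
     - 4 * (jbr_inv_sq y * (1 - jbr_inv_sq y)) * (2 * jbr_inv_sq y' - 1)
     - 16 * (jbr_inv_sq y * (1 - jbr_inv_sq y)) * (jbr_inv_sq y' * (1 - jbr_inv_sq y'))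
         * (ln y - ln y')"

lemma green_I_diag: "green_I y y = 1"
  unfolding green_I_def by (simp add: algebra_simps)

lemma green_J_diag: "green_J y y = 0"
  unfolding green_J_def by simp

lemma has_real_derivative_green_I:
  assumes "0 < y"
  shows "((\<lambda>t. green_I t y') has_real_derivative green_J y y' / y) (at y)"
  unfolding green_I_def green_J_def using assms
  by (auto intro!: derivative_eq_intros has_real_derivative_jbr_inv_sq) (simp add: field_simps)

lemma has_real_derivative_green_J:
  assumes "0 < y"
  shows "((\<lambda>t. green_J t y') has_real_derivative
           - 8 * (jbr_inv_sq y * (1 - jbr_inv_sq y)) * green_I y y' / y) (at y)"
  unfolding green_I_def green_J_def using assms
  by (auto intro!: derivative_eq_intros has_real_derivative_jbr_inv_sq) (simp add: field_simps)

lemma higher_diff_on_jbr_inv_sq: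
  fixes f :: "'a::real_normed_vector \<Rightarrow> real"
  assumes "open S" "higher_diff_on n S f"
  shows "higher_diff_on n S (\<lambda>x. jbr_inv_sq (f x))"
proof -
  have "higher_diff_on n S (\<lambda>x. inverse (1 + f x * f x))"
    using assms
    by (intro higher_diff_on_inverse higher_diff_on_add higher_diff_on_mult higher_diff_on_const)
      (auto simp: add_nonneg_eq_0_iff)
  then show ?thesis
    by (simp add: jbr_inv_sq_def power2_eq_square divide_inverse)
qed

lemma smooth_on_green_I:
  "smooth_on {p :: real \<times> real. 0 < snd p \<and> snd p < fst p} (\<lambda>p. green_I (fst p) (snd p))"
  unfolding smooth_on_def
proof
  fix n
  let ?S = "{p :: real \<times> real. 0 < snd p \<and> snd p < fst p}"
  have S: "open ?S"
    by (intro open_Collect_conj open_Collect_less continuous_intros)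
  have fst: "higher_diff_on n ?S fst" and snd: "higher_diff_on n ?S snd"
    by (simp_all add: higher_diff_on_bounded_linear bounded_linear_fst bounded_linear_snd)
  have "higher_diff_on n ?S (\<lambda>p. ln (fst p))" "higher_diff_on n ?S (\<lambda>p. ln (snd p))"
    by (auto intro!: higher_diff_on_ln[OF S] fst snd)
  then show "higher_diff_on n ?S (\<lambda>p. green_I (fst p) (snd p))"
    unfolding green_I_def
    by (intro higher_diff_on_add[OF S] higher_diff_on_diff[OF S] higher_diff_on_mult[OF S]
        higher_diff_on_const higher_diff_on_jbr_inv_sq[OF S] fst snd)
qed

section \<open>Iterated Euler derivatives of the kernel\<close>

definition X_one_minus_X :: "real poly" where
  "X_one_minus_X = [:0, 1, -1:]"

lemma poly_X_one_minus_X [simp]: "poly X_one_minus_X x = x * (1 - x)"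
  unfolding X_one_minus_X_def by (simp add: algebra_simps)

lemma X_one_minus_X_dvd_imp_bound:
  assumes "X_one_minus_X dvd p"
  obtains C where "0 \<le> C" "\<And>x. 0 \<le> x \<Longrightarrow> x \<le> 1 \<Longrightarrow> \<bar>poly p x\<bar> \<le> C * (x * (1 - x))"
proof -
  obtain q where p: "p = X_one_minus_X * q" using assms by blast
  have "bounded (poly q ` {0..1})"
    by (intro compact_imp_bounded compact_continuous_image continuous_intros) simp
  then obtain C where "0 < C" and C: "\<And>x. x \<in> {0..1} \<Longrightarrow> \<bar>poly q x\<bar> \<le> C"
    unfolding bounded_pos by auto
  show thesis
  proof (rule that)
    fix x :: real assume "0 \<le> x" "x \<le> 1"
    then have "\<bar>poly p x\<bar> = x * (1 - x) * \<bar>poly q x\<bar>"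
      by (simp add: p abs_mult)
    also have "\<dots> \<le> x * (1 - x) * C"
      using C \<open>0 \<le> x\<close> \<open>x \<le> 1\<close> by (intro mult_left_mono) auto
    finally show "\<bar>poly p x\<bar> \<le> C * (x * (1 - x))" by (simp add: mult.commute)
  qed (use \<open>0 < C\<close> in simp)
qed

lemma has_real_derivative_poly_jbr_inv_sq:
  assumes "y \<noteq> 0"
  shows "((\<lambda>t. poly P (jbr_inv_sq t)) has_real_derivative
           poly (pderiv P) (jbr_inv_sq y) * (- 2 * (jbr_inv_sq y * (1 - jbr_inv_sq y)) / y)) (at y)"
  using DERIV_chain2[OF poly_DERIV has_real_derivative_jbr_inv_sq[OF assms]] by simp

definition euler_step :: "real poly \<times> real poly \<Rightarrow> real poly \<times> real poly" where
  "euler_step PR =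
     (smult (- 2) (X_one_minus_X * pderiv (fst PR)) - smult 8 (X_one_minus_X * snd PR),
      fst PR - smult 2 (X_one_minus_X * pderiv (snd PR)))"

primrec euler_coeffs :: "nat \<Rightarrow> real poly \<times> real poly" where
  "euler_coeffs 0 = (1, 0)"
| "euler_coeffs (Suc k) = euler_step (euler_coeffs k)"

definition green_comb :: "real poly \<times> real poly \<Rightarrow> real \<Rightarrow> real \<Rightarrow> real" where
  "green_comb PR y y' =
     poly (fst PR) (jbr_inv_sq y) * green_I y y' + poly (snd PR) (jbr_inv_sq y) * green_J y y'"

lemma has_real_derivative_green_comb:
  assumes "0 < y"
  shows "((\<lambda>t. green_comb PR t y') has_real_derivative green_comb (euler_step PR) y y' / y) (at y)"
proof -
  have y: "y \<noteq> 0" using assms by simp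
  note D = DERIV_add[OF
      DERIV_mult[OF has_real_derivative_poly_jbr_inv_sq[OF y] has_real_derivative_green_I[OF assms]]
      DERIV_mult[OF has_real_derivative_poly_jbr_inv_sq[OF y] has_real_derivative_green_J[OF assms]]]
  show ?thesis
    unfolding green_comb_def by (rule DERIV_cong[OF D]) (use y in \<open>simp add: euler_step_def field_simps\<close>)
qed

lemma ydy_power_green_I:
  assumes "0 < y"
  shows "(ydy ^^ k) green_I y y' = green_comb (euler_coeffs k) y y'"
  using assms
proof (induction k arbitrary: y)
  case 0
  then show ?case by (simp add: green_comb_def)
next
  case (Suc k)
  have "\<forall>\<^sub>F t in nhds y. (ydy ^^ k) green_I t y' = green_comb (euler_coeffs k) t y'"
    using eventually_nhds_in_open[of "{0<..}" y] Suc by (auto elim!: eventually_mono)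
  then have "(ydy ^^ Suc k) green_I y y' = y * deriv (\<lambda>t. green_comb (euler_coeffs k) t y') y"
    by (simp add: ydy_def deriv_cong_ev)
  also have "\<dots> = green_comb (euler_coeffs (Suc k)) y y'"
    using DERIV_imp_deriv[OF has_real_derivative_green_comb[OF Suc.prems]] Suc.prems by simp
  finally show ?case .
qed

lemma ydy_green_I: "0 < y \<Longrightarrow> ydy green_I y y' = green_J y y'"
  using ydy_power_green_I[of y 1 y'] by (simp add: green_comb_def euler_step_def)

lemma X_one_minus_X_dvd_euler_coeffs:
  assumes "2 \<le> k"
  shows "X_one_minus_X dvd fst (euler_coeffs k) \<and> X_one_minus_X dvd snd (euler_coeffs k)"
  using assms
proof (induction k rule: dec_induct)
  case base
  then show ?case by (auto simp: numeral_2_eq_2 euler_step_def intro!: dvd_smult)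
next
  case (step k)
  then show ?case by (auto simp: euler_step_def intro!: dvd_diff dvd_smult)
qed

primrec scaled_deriv_poly :: "real poly \<Rightarrow> nat \<Rightarrow> real poly" where
  "scaled_deriv_poly S 0 = S"
| "scaled_deriv_poly S (Suc j) =
     smult (- 2) (X_one_minus_X * pderiv (scaled_deriv_poly S j)) - smult (of_nat j) (scaled_deriv_poly S j)"

lemma X_one_minus_X_dvd_scaled_deriv_poly:
  "X_one_minus_X dvd S \<Longrightarrow> X_one_minus_X dvd scaled_deriv_poly S j"
  by (induction j) (auto intro!: dvd_diff dvd_smult)

lemma has_real_derivative_scaled_deriv_poly:
  assumes "y \<noteq> 0"
  shows "((\<lambda>t. poly (scaled_deriv_poly S j) (jbr_inv_sq t) / t ^ j) has_real_derivative
           poly (scaled_deriv_poly S (Suc j)) (jbr_inv_sq y) / y ^ Suc j) (at y)"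
proof -
  note D = DERIV_divide[OF has_real_derivative_poly_jbr_inv_sq[OF assms] DERIV_pow[of j]]
  have "j = 0 \<or> y ^ j = y * y ^ (j - 1)"
    by (cases j) auto
  then show ?thesis
    by (intro DERIV_cong[OF D]) (use assms in \<open>auto simp: field_simps\<close>)
qed

lemma higher_deriv_poly_jbr_inv_sq:
  assumes "\<And>y. 0 < y \<Longrightarrow> f y = poly S (jbr_inv_sq y)" "0 < y"
  shows "(deriv ^^ j) f y = poly (scaled_deriv_poly S j) (jbr_inv_sq y) / y ^ j"
  using assms(2)
proof (induction j arbitrary: y)
  case 0
  then show ?case using assms(1) by simp
next
  case (Suc j)
  have "\<forall>\<^sub>F t in nhds y. (deriv ^^ j) f t = poly (scaled_deriv_poly S j) (jbr_inv_sq t) / t ^ j"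
    using eventually_nhds_in_open[of "{0<..}" y] Suc by (auto elim!: eventually_mono)
  then have "(deriv ^^ Suc j) f y = deriv (\<lambda>t. poly (scaled_deriv_poly S j) (jbr_inv_sq t) / t ^ j) y"
    by (simp add: deriv_cong_ev)
  also have "\<dots> = poly (scaled_deriv_poly S (Suc j)) (jbr_inv_sq y) / y ^ Suc j"
    using Suc.prems by (intro DERIV_imp_deriv has_real_derivative_scaled_deriv_poly) simp
  finally show ?case .
qed

lemma higher_deriv_poly_jbr_inv_sq_differentiable:
  assumes "\<And>y. 0 < y \<Longrightarrow> f y = poly S (jbr_inv_sq y)" "0 < y"
  shows "(deriv ^^ j) f differentiable (at y)"
proof -
  have "((\<lambda>t. poly (scaled_deriv_poly S j) (jbr_inv_sq t) / t ^ j) has_real_derivative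
           poly (scaled_deriv_poly S (Suc j)) (jbr_inv_sq y) / y ^ Suc j) (at y)"
    using assms(2) by (intro has_real_derivative_scaled_deriv_poly) simp
  then have "((deriv ^^ j) f has_real_derivative
           poly (scaled_deriv_poly S (Suc j)) (jbr_inv_sq y) / y ^ Suc j) (at y)"
    by (rule has_field_derivative_transform_within_open[of _ _ _ "{0<..}"])
      (use assms higher_deriv_poly_jbr_inv_sq[OF assms(1)] in auto)
  then show ?thesis by (rule has_field_derivative_imp_has_derivative[THEN differentiableI])
qed

section \<open>Pointwise bounds\<close>

lemma green_J_eq:
  "green_J y y' =
    4 * ((y'\<^sup>2 - y\<^sup>2) * (1 + y\<^sup>2 * y'\<^sup>2) - 4 * y\<^sup>2 * y'\<^sup>2 * (ln y - ln y'))
      / ((1 + y\<^sup>2)\<^sup>2 * (1 + y'\<^sup>2)\<^sup>2)"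
proof -
  have "4 * (q / B\<^sup>2) * ((1 - p) / A) - 4 * (p / A\<^sup>2) * ((1 - q) / B) - 16 * (p / A\<^sup>2) * (q / B\<^sup>2) * L
      = 4 * ((q - p) * (1 + p * q) - 4 * p * q * L) / (A\<^sup>2 * B\<^sup>2)"
    if "A = 1 + p" "B = 1 + q" "A \<noteq> 0" "B \<noteq> 0" for p q A B L :: real
  proof -
    have "4 * (q / B\<^sup>2) * ((1 - p) / A) - 4 * (p / A\<^sup>2) * ((1 - q) / B) - 16 * (p / A\<^sup>2) * (q / B\<^sup>2) * L
        = (4 * q * (1 - p) * A - 4 * p * (1 - q) * B - 16 * p * q * L) / (A\<^sup>2 * B\<^sup>2)"
      using that(3,4) by (simp add: field_simps power2_eq_square)
    also have "4 * q * (1 - p) * A - 4 * p * (1 - q) * B - 16 * p * q * L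
        = 4 * ((q - p) * (1 + p * q) - 4 * p * q * L)"
      unfolding that(1,2) by (simp add: algebra_simps)
    finally show ?thesis .
  qed
  then show ?thesis
    unfolding green_J_def jbr_inv_sq_mult_one_minus two_jbr_inv_sq_minus_one by simp
qed

lemma green_J_numerator_le:
  fixes y y' :: real
  assumes "0 < y'" "y' < y"
  shows "(y\<^sup>2 - y'\<^sup>2) * (1 + y\<^sup>2 * y'\<^sup>2) + 4 * y\<^sup>2 * y'\<^sup>2 * (ln y - ln y')
    \<le> 2 * y * (y - y') * ((1 + y\<^sup>2) * (1 + y'\<^sup>2))"
proof -
  have "(y\<^sup>2 - y'\<^sup>2) * (1 + y\<^sup>2 * y'\<^sup>2) + 4 * y\<^sup>2 * y'\<^sup>2 * (ln y - ln y')
      \<le> (y - y') * (2 * y) * (1 + y\<^sup>2 * y'\<^sup>2) + 4 * y\<^sup>2 * y'\<^sup>2 * ((y - y') / y')"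
  proof (intro add_mono mult_right_mono mult_left_mono ln_diff_le)
    have "y\<^sup>2 - y'\<^sup>2 = (y - y') * (y + y')" by (simp add: power2_eq_square algebra_simps)
    then show "y\<^sup>2 - y'\<^sup>2 \<le> (y - y') * (2 * y)" using assms by simp
  qed (use assms in auto)
  also have "\<dots> = 2 * y * (y - y') * (1 + y * y')\<^sup>2"
    using assms by (simp add: field_simps power2_eq_square)
  also have "\<dots> \<le> 2 * y * (y - y') * ((1 + y\<^sup>2) * (1 + y'\<^sup>2))"
  proof (rule mult_left_mono)
    have "2 * y * y' \<le> y\<^sup>2 + y'\<^sup>2" using sum_squares_bound[of y y'] by (simp add: power2_eq_square)
    then show "(1 + y * y')\<^sup>2 \<le> (1 + y\<^sup>2) * (1 + y'\<^sup>2)"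
      by (simp add: power2_eq_square algebra_simps)
  qed (use assms in simp)
  finally show ?thesis .
qed

lemma abs_green_J_le:
  assumes "0 < y'" "y' < y"
  shows "\<bar>green_J y y'\<bar> \<le> 8 * ((y - y') / y) * (y\<^sup>2 / ((1 + y\<^sup>2) * (1 + y'\<^sup>2)))"
proof -
  define N where "N = (y\<^sup>2 - y'\<^sup>2) * (1 + y\<^sup>2 * y'\<^sup>2) + 4 * y\<^sup>2 * y'\<^sup>2 * (ln y - ln y')"
  define X where "X = (1 + y\<^sup>2) * (1 + y'\<^sup>2)"
  have "0 < y" "0 < X" unfolding X_def using assms by auto
  have "0 \<le> N"
    unfolding N_def using assms by (intro add_nonneg_nonneg mult_nonneg_nonneg) auto
  have "(1 + y\<^sup>2)\<^sup>2 * (1 + y'\<^sup>2)\<^sup>2 = X\<^sup>2"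
    unfolding X_def by (simp add: power_mult_distrib)
  then have "\<bar>green_J y y'\<bar> = 4 * N / X\<^sup>2"
    unfolding green_J_eq using \<open>0 \<le> N\<close> by (simp add: N_def abs_divide algebra_simps)
  also have "\<dots> \<le> 4 * (2 * y * (y - y') * X) / X\<^sup>2"
    using green_J_numerator_le[OF assms] unfolding N_def X_def by (intro divide_right_mono) auto
  also have "\<dots> = 8 * ((y - y') / y) * (y\<^sup>2 / X)"
    using \<open>0 < X\<close> \<open>0 < y\<close> by (simp add: field_simps power2_eq_square)
  finally show ?thesis unfolding X_def .
qed

lemma abs_green_J_le_min:
  assumes "0 < y'" "y' < y"
  shows "\<bar>green_J y y'\<bar> \<le> 8 * ((y - y') / y) * min (y\<^sup>2 / (1 + y\<^sup>2)) (1 / (1 + y'\<^sup>2))"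
proof -
  define a where "a = y\<^sup>2 / (1 + y\<^sup>2)"
  define b where "b = 1 / (1 + y'\<^sup>2)"
  have ab: "0 \<le> a" "a \<le> 1" "0 \<le> b" "b \<le> 1"
    unfolding a_def b_def by auto
  have "\<bar>green_J y y'\<bar> \<le> 8 * ((y - y') / y) * (a * b)"
    using abs_green_J_le[OF assms] unfolding a_def b_def by simp
  also have "\<dots> \<le> 8 * ((y - y') / y) * min a b"
    using ab assms by (intro mult_left_mono) (auto simp: mult_left_le mult_left_le_one_le)
  finally show ?thesis unfolding a_def b_def .
qed

lemma abs_ydy_green_I_le:
  assumes "0 < y'" "y' < y"
  shows "\<bar>ydy green_I y y'\<bar> \<le> 8 * ((y - y') / y) * min (y\<^sup>2 / (jbr y)\<^sup>2) (1 / (jbr y')\<^sup>2)"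
  using abs_green_J_le_min[OF assms] assms by (simp add: ydy_green_I jbr_sq)

lemma abs_green_J_le_8:
  assumes "0 < y'" "y' < y"
  shows "\<bar>green_J y y'\<bar> \<le> 8"
proof -
  have "8 * ((y - y') / y) * min (y\<^sup>2 / (1 + y\<^sup>2)) (1 / (1 + y'\<^sup>2)) \<le> 8 * 1 * 1"
    using assms by (intro mult_mono) (auto simp: min_le_iff_disj)
  then show ?thesis using abs_green_J_le_min[OF assms] by simp
qed

lemma abs_green_J_le_near_diag:
  assumes "0 < y'" "y' < y"
  shows "\<bar>green_J y y'\<bar> \<le> 8 * (y - y') * (y / (1 + y\<^sup>2))"
proof -
  have "\<bar>green_J y y'\<bar> \<le> 8 * ((y - y') / y) * min (y\<^sup>2 / (1 + y\<^sup>2)) (1 / (1 + y'\<^sup>2))"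
    by (rule abs_green_J_le_min[OF assms])
  also have "\<dots> \<le> 8 * ((y - y') / y) * (y\<^sup>2 / (1 + y\<^sup>2))"
    using assms by (intro mult_left_mono) auto
  also have "\<dots> = 8 * (y - y') * (y / (1 + y\<^sup>2))"
    using assms by (simp add: power2_eq_square)
  finally show ?thesis .
qed

lemma weighted_ln_ratio_le:
  assumes "0 < y'" "y' < y"
  shows "(1 - jbr_inv_sq y') * (ln y - ln y') \<le> ln (jbr y / jbr y') + 1 / 4"
proof -
  define t where "t = y' / jbr y'"
  have t: "0 < t" "t < 1"
    unfolding t_def using assms jbr_pos[of y'] by (auto simp: jbr_def real_less_rsqrt)
  have w: "1 - jbr_inv_sq y' = t\<^sup>2"
    unfolding t_def jbr_inv_sq_def power_divide jbr_sq by (simp add: field_simps)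
  have "jbr y' \<le> jbr y"
    unfolding jbr_def using assms by (simp add: power_strict_mono less_imp_le)
  then have r: "0 \<le> ln (jbr y / jbr y')"
    using jbr_pos[of y'] by simp
  have "y < jbr y"
    unfolding jbr_def by (simp add: real_less_rsqrt)
  then have s: "ln (y / jbr y) \<le> 0"
    using assms jbr_pos[of y] by simp
  have L: "ln y - ln y' = ln (jbr y / jbr y') + ln (y / jbr y) - ln t"
    unfolding t_def using assms jbr_pos[of y] jbr_pos[of y'] by (simp add: ln_div)
  have "t\<^sup>2 * (ln y - ln y')
      = t\<^sup>2 * ln (jbr y / jbr y') + t\<^sup>2 * ln (y / jbr y) + t\<^sup>2 * (- ln t)"
    unfolding L by (simp add: algebra_simps)
  also have "\<dots> \<le> ln (jbr y / jbr y') + 0 + t * (1 - t)"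
  proof (intro add_mono)
    show "t\<^sup>2 * ln (jbr y / jbr y') \<le> ln (jbr y / jbr y')"
      using r t by (intro mult_left_le_one_le) (auto simp: power_le_one)
    show "t\<^sup>2 * ln (y / jbr y) \<le> 0"
      using s by (simp add: mult_nonneg_nonpos)
    have "- ln t \<le> 1 / t - 1"
      using ln_le_minus_one[of "1 / t"] t by (simp add: ln_div)
    then have "t\<^sup>2 * (- ln t) \<le> t\<^sup>2 * (1 / t - 1)"
      by (intro mult_left_mono) auto
    also have "\<dots> = t * (1 - t)"
      using t by (simp add: power2_eq_square field_simps)
    finally show "t\<^sup>2 * (- ln t) \<le> t * (1 - t)" .
  qed
  also have "\<dots> \<le> ln (jbr y / jbr y') + 1 / 4"
    using sum_squares_bound[of t "1 - t"] by (simp add: power2_eq_square algebra_simps)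
  finally show ?thesis unfolding w .
qed

lemma abs_green_I_le_ln:
  assumes "0 < y'" "y' \<le> y"
  shows "\<bar>green_I y y'\<bar> \<le> 1 + 4 * (jbr_inv_sq y' * (1 - jbr_inv_sq y')) * (ln y - ln y' + 3)"
proof -
  define u where "u = jbr_inv_sq y"
  define v where "v = jbr_inv_sq y'"
  define L where "L = ln y - ln y'"
  have u: "0 < u" "u \<le> 1" and v: "0 < v" "v \<le> 1"
    unfolding u_def v_def by (simp_all add: jbr_inv_sq_pos jbr_inv_sq_le_one)
  have "0 \<le> L" unfolding L_def using assms by simp
  have "0 \<le> v * (1 - v)" using v by simp
  have "\<bar>(2 * u - 1) * (L - 1) + 2 * u\<bar> \<le> L + 3"
  proof -
    have "\<bar>(2 * u - 1) * (L - 1)\<bar> \<le> \<bar>L - 1\<bar>"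
      using u by (auto simp: abs_mult intro!: mult_left_le_one_le)
    then show ?thesis using u \<open>0 \<le> L\<close> by linarith
  qed
  moreover have "\<bar>(2 * u - 1) * (2 * v - 1)\<bar> \<le> 1"
    using u v by (auto simp: abs_mult abs_le_iff intro!: mult_le_one)
  moreover have "\<bar>4 * (v * (1 - v)) * ((2 * u - 1) * (L - 1) + 2 * u)\<bar>
      = 4 * (v * (1 - v)) * \<bar>(2 * u - 1) * (L - 1) + 2 * u\<bar>"
    using \<open>0 \<le> v * (1 - v)\<close> by (simp add: abs_mult_pos')
  moreover have "green_I y y' = (2 * u - 1) * (2 * v - 1) + 4 * (v * (1 - v)) * ((2 * u - 1) * (L - 1) + 2 * u)"
    unfolding green_I_def u_def v_def L_def ..
  ultimately show ?thesis
    unfolding v_def[symmetric] L_def[symmetric]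
    using abs_triangle_ineq[of "(2 * u - 1) * (2 * v - 1)" "4 * (v * (1 - v)) * ((2 * u - 1) * (L - 1) + 2 * u)"]
      mult_left_mono[of "\<bar>(2 * u - 1) * (L - 1) + 2 * u\<bar>" "L + 3" "4 * (v * (1 - v))"] \<open>0 \<le> v * (1 - v)\<close>
    by linarith
qed

lemma abs_green_I_le:
  assumes "0 < y'" "y' < y"
  shows "\<bar>green_I y y'\<bar> \<le> 5 * (1 + 1 / (jbr y')\<^sup>2 * ln (2 + jbr y / jbr y'))"
proof -
  define v where "v = jbr_inv_sq y'"
  define r where "r = jbr y / jbr y'"
  have v: "0 < v" "v \<le> 1"
    unfolding v_def by (simp_all add: jbr_inv_sq_pos jbr_inv_sq_le_one)
  have "0 < r" unfolding r_def by (simp add: jbr_pos)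
  have vw: "0 \<le> v * (1 - v)" "4 * (v * (1 - v)) \<le> 1"
    using v sum_squares_bound[of v "1 - v"] by (auto simp: power2_eq_square algebra_simps)
  have "\<bar>green_I y y'\<bar> \<le> 1 + 4 * (v * (1 - v)) * (ln y - ln y' + 3)"
    unfolding v_def using abs_green_I_le_ln assms by simp
  also have "\<dots> = 1 + 4 * v * ((1 - v) * (ln y - ln y')) + 3 * (4 * (v * (1 - v)))"
    by (simp add: algebra_simps)
  also have "\<dots> \<le> 1 + 4 * v * (ln r + 1 / 4) + 3"
    using weighted_ln_ratio_le[OF assms] vw v unfolding v_def r_def
    by (intro add_mono mult_left_mono) auto
  also have "\<dots> \<le> 5 + 4 * v * ln (2 + r)"
  proof -
    have "ln r \<le> ln (2 + r)" using \<open>0 < r\<close> by simp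
    then have "v * ln r \<le> v * ln (2 + r)" using v by (intro mult_left_mono) auto
    moreover have "4 * v * (ln r + 1 / 4) = v + 4 * (v * ln r)" "4 * v * ln (2 + r) = 4 * (v * ln (2 + r))"
      by (simp_all add: algebra_simps)
    ultimately show ?thesis using v by linarith
  qed
  also have "\<dots> \<le> 5 * (1 + v * ln (2 + r))"
    using v \<open>0 < r\<close> by simp
  finally show ?thesis unfolding v_def r_def jbr_inv_sq_eq .
qed

lemma abs_green_I_minus_one_le:
  assumes "0 < y'" "y' < y"
  shows "\<bar>green_I y y' - 1\<bar> \<le> 8 * (y - y')\<^sup>2"
proof -
  obtain z where z: "y' < z" "z < y"
    and mvt: "green_I y y' - green_I y' y' = (y - y') * (green_J z y' / z)"
    using MVT2[of y' y "\<lambda>t. green_I t y'" "\<lambda>t. green_J t y' / t"] assms has_real_derivative_green_I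
    by force
  have "0 < z" using z assms by simp
  have "\<bar>green_J z y'\<bar> \<le> 8 * (z - y') * (z / (1 + z\<^sup>2))"
    using abs_green_J_le_near_diag assms z by simp
  also have "\<dots> \<le> 8 * (y - y') * z"
    using z \<open>0 < z\<close> by (intro mult_mono) (auto simp: divide_le_eq)
  finally have "\<bar>green_J z y' / z\<bar> \<le> 8 * (y - y')"
    using \<open>0 < z\<close> by (simp add: divide_le_eq)
  have "\<bar>green_I y y' - 1\<bar> = (y - y') * \<bar>green_J z y' / z\<bar>"
    using mvt assms by (simp add: green_I_diag abs_mult)
  also have "\<dots> \<le> (y - y') * (8 * (y - y'))"
    using \<open>\<bar>green_J z y' / z\<bar> \<le> 8 * (y - y')\<close> assms by (intro mult_left_mono) auto
  also have "\<dots> = 8 * (y - y')\<^sup>2"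
    by (simp add: power2_eq_square)
  finally show ?thesis .
qed

lemma green_I_near_diag:
  "\<forall>\<epsilon>>0. \<exists>\<delta>>0. \<forall>y y'. 0 < y' \<and> y' < y \<and> y - y' < \<delta> \<longrightarrow> \<bar>green_I y y' - 1\<bar> < \<epsilon>"
proof (intro allI impI)
  fix \<epsilon> :: real assume "0 < \<epsilon>"
  show "\<exists>\<delta>>0. \<forall>y y'. 0 < y' \<and> y' < y \<and> y - y' < \<delta> \<longrightarrow> \<bar>green_I y y' - 1\<bar> < \<epsilon>"
  proof (intro exI[of _ "min 1 (\<epsilon> / 8)"] conjI allI impI)
    fix y y' :: real assume yy': "0 < y' \<and> y' < y \<and> y - y' < min 1 (\<epsilon> / 8)"
    then have "8 * (y - y')\<^sup>2 < 8 * (1 * (\<epsilon> / 8))"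
      unfolding power2_eq_square by (intro mult_strict_left_mono mult_strict_mono) auto
    then show "\<bar>green_I y y' - 1\<bar> < \<epsilon>"
      using abs_green_I_minus_one_le[of y' y] yy' by simp
  qed (use \<open>0 < \<epsilon>\<close> in simp)
qed

lemma ydy_green_I_near_diag:
  "\<forall>\<epsilon>>0. \<exists>\<delta>>0. \<forall>y y'. 0 < y' \<and> y' < y \<and> y - y' < \<delta> \<longrightarrow> \<bar>ydy green_I y y'\<bar> < \<epsilon>"
proof (intro allI impI)
  fix \<epsilon> :: real assume "0 < \<epsilon>"
  show "\<exists>\<delta>>0. \<forall>y y'. 0 < y' \<and> y' < y \<and> y - y' < \<delta> \<longrightarrow> \<bar>ydy green_I y y'\<bar> < \<epsilon>"
  proof (intro exI[of _ "\<epsilon> / 8"] conjI allI impI)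
    fix y y' :: real assume yy': "0 < y' \<and> y' < y \<and> y - y' < \<epsilon> / 8"
    have "y \<le> 1 + y\<^sup>2"
      using zero_le_power2[of "y - 1 / 2"] by (simp add: power2_eq_square algebra_simps)
    then have "y / (1 + y\<^sup>2) \<le> 1" by simp
    then have "8 * (y - y') * (y / (1 + y\<^sup>2)) \<le> 8 * (y - y')"
      using yy' by (intro mult_left_le) auto
    then show "\<bar>ydy green_I y y'\<bar> < \<epsilon>"
      using abs_green_J_le_near_diag[of y' y] yy' by (simp add: ydy_green_I)
  qed (use \<open>0 < \<epsilon>\<close> in simp)
qed

lemma abs_ydy_power_green_I_le:
  assumes "2 \<le> k"
  shows "\<exists>C. \<forall>y y'. 0 < y' \<and> y' < y \<longrightarrow>
    \<bar>(ydy ^^ k) green_I y y'\<bar> \<le> C * (y\<^sup>2 / (1 + y ^ 4)) * (1 + 1 / (jbr y')\<^sup>2 * ln (2 + jbr y / jbr y'))"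
proof -
  obtain P R where PR: "euler_coeffs k = (P, R)" by fastforce
  then have "X_one_minus_X dvd P" "X_one_minus_X dvd R"
    using X_one_minus_X_dvd_euler_coeffs[OF assms] by auto
  then obtain CP CR where "0 \<le> CP" "0 \<le> CR"
    and CP: "\<And>x. 0 \<le> x \<Longrightarrow> x \<le> 1 \<Longrightarrow> \<bar>poly P x\<bar> \<le> CP * (x * (1 - x))"
    and CR: "\<And>x. 0 \<le> x \<Longrightarrow> x \<le> 1 \<Longrightarrow> \<bar>poly R x\<bar> \<le> CR * (x * (1 - x))"
    by (metis X_one_minus_X_dvd_imp_bound)
  show ?thesis
  proof (intro exI[of _ "5 * CP + 8 * CR"] allI impI)
    fix y y' :: real assume yy': "0 < y' \<and> y' < y"
    define a where "a = jbr_inv_sq y * (1 - jbr_inv_sq y)"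
    define W where "W = 1 + 1 / (jbr y')\<^sup>2 * ln (2 + jbr y / jbr y')"
    have u: "0 \<le> jbr_inv_sq y" "jbr_inv_sq y \<le> 1"
      using jbr_inv_sq_pos[of y] jbr_inv_sq_le_one[of y] by auto
    then have "0 \<le> a" unfolding a_def by simp
    have "1 \<le> W"
      unfolding W_def using jbr_pos[of y] jbr_pos[of y'] by simp
    have "\<bar>(ydy ^^ k) green_I y y'\<bar> = \<bar>poly P (jbr_inv_sq y) * green_I y y' + poly R (jbr_inv_sq y) * green_J y y'\<bar>"
      using yy' by (simp add: ydy_power_green_I green_comb_def PR)
    also have "\<dots> \<le> \<bar>poly P (jbr_inv_sq y)\<bar> * \<bar>green_I y y'\<bar> + \<bar>poly R (jbr_inv_sq y)\<bar> * \<bar>green_J y y'\<bar>"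
      by (metis abs_mult abs_triangle_ineq)
    also have "\<dots> \<le> (CP * a) * (5 * W) + (CR * a) * (8 * W)"
    proof (intro add_mono mult_mono)
      show "\<bar>green_I y y'\<bar> \<le> 5 * W"
        unfolding W_def using abs_green_I_le yy' by simp
      show "\<bar>green_J y y'\<bar> \<le> 8 * W"
        using abs_green_J_le_8[of y' y] yy' \<open>1 \<le> W\<close> by simp
    qed (use CP CR u \<open>0 \<le> CP\<close> \<open>0 \<le> CR\<close> \<open>0 \<le> a\<close> in \<open>auto simp: a_def\<close>)
    also have "\<dots> = (5 * CP + 8 * CR) * a * W"
      by (simp add: algebra_simps)
    also have "\<dots> \<le> (5 * CP + 8 * CR) * (y\<^sup>2 / (1 + y ^ 4)) * W"
      using jbr_inv_sq_mult_one_minus_le[of y] \<open>0 \<le> CP\<close> \<open>0 \<le> CR\<close> \<open>1 \<le> W\<close>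
      unfolding a_def by (intro mult_right_mono mult_left_mono) auto
    finally show "\<bar>(ydy ^^ k) green_I y y'\<bar> \<le> (5 * CP + 8 * CR) * (y\<^sup>2 / (1 + y ^ 4)) * W" .
  qed
qed

section \<open>Limits on the diagonal\<close>

lemma tendsto_ydy_power_green_I_diag:
  assumes "0 < y"
  shows "((\<lambda>y'. (ydy ^^ k) green_I y y') \<longlongrightarrow> poly (fst (euler_coeffs k)) (jbr_inv_sq y)) (at_left y)"
proof -
  have "isCont (\<lambda>y'. green_comb (euler_coeffs k) y y') y"
    unfolding green_comb_def green_I_def green_J_def jbr_inv_sq_def using assms
    by (intro continuous_intros) auto
  then have "((\<lambda>y'. green_comb (euler_coeffs k) y y') \<longlongrightarrow> poly (fst (euler_coeffs k)) (jbr_inv_sq y)) (at y)"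
    by (simp add: isCont_def green_comb_def green_I_diag green_J_diag)
  then show ?thesis
    using assms by (simp add: ydy_power_green_I filterlim_at_split)
qed

lemma I_diag_green_I:
  assumes "0 < y"
  shows "I_diag green_I k y = poly (fst (euler_coeffs k)) (jbr_inv_sq y)"
  unfolding I_diag_def
  by (rule tendsto_Lim[OF trivial_limit_at_left_real tendsto_ydy_power_green_I_diag[OF assms]])

lemma seminorm_l_I_diag_green_I_le:
  assumes "2 \<le> k"
  shows "\<exists>C. \<forall>y>0. seminorm_l l (I_diag green_I k) y \<le> C * (y\<^sup>2 / (1 + y ^ 4))"
proof -
  define S where "S = fst (euler_coeffs k)"
  have S: "\<And>y. 0 < y \<Longrightarrow> I_diag green_I k y = poly S (jbr_inv_sq y)"
    unfolding S_def by (rule I_diag_green_I)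
  have "\<exists>C\<ge>0. \<forall>x. 0 \<le> x \<longrightarrow> x \<le> 1 \<longrightarrow> \<bar>poly (scaled_deriv_poly S j) x\<bar> \<le> C * (x * (1 - x))" for j
    using X_one_minus_X_dvd_euler_coeffs[OF assms]
    by (metis S_def X_one_minus_X_dvd_imp_bound X_one_minus_X_dvd_scaled_deriv_poly)
  then obtain C where C: "\<And>j. 0 \<le> C j"
    "\<And>j x. 0 \<le> x \<Longrightarrow> x \<le> 1 \<Longrightarrow> \<bar>poly (scaled_deriv_poly S j) x\<bar> \<le> C j * (x * (1 - x))"
    by metis
  show ?thesis
  proof (intro exI[of _ "\<Sum>j\<le>l. C j"] allI impI)
    fix y :: real assume "0 < y"
    have "\<bar>y ^ j * (deriv ^^ j) (I_diag green_I k) y\<bar> \<le> (\<Sum>j\<le>l. C j) * (y\<^sup>2 / (1 + y ^ 4))"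
      if "j \<le> l" for j
    proof -
      have u: "0 \<le> jbr_inv_sq y" "jbr_inv_sq y \<le> 1"
        using jbr_inv_sq_pos[of y] jbr_inv_sq_le_one[of y] by auto
      have "\<bar>y ^ j * (deriv ^^ j) (I_diag green_I k) y\<bar> = \<bar>poly (scaled_deriv_poly S j) (jbr_inv_sq y)\<bar>"
        using higher_deriv_poly_jbr_inv_sq[OF S \<open>0 < y\<close>] \<open>0 < y\<close> by simp
      also have "\<dots> \<le> C j * (jbr_inv_sq y * (1 - jbr_inv_sq y))"
        using C(2) u by blast
      also have "\<dots> \<le> (\<Sum>j\<le>l. C j) * (y\<^sup>2 / (1 + y ^ 4))"
        using that C(1) u jbr_inv_sq_mult_one_minus_le[of y]
        by (intro mult_mono member_le_sum sum_nonneg) auto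
      finally show ?thesis .
    qed
    then show "seminorm_l l (I_diag green_I k) y \<le> (\<Sum>j\<le>l. C j) * (y\<^sup>2 / (1 + y ^ 4))"
      unfolding seminorm_l_def by (subst Max_le_iff) auto
  qed
qed

section \<open>Green's functions\<close>

lemma Q_pos: "0 < Q y"
  unfolding Q_def by simp

lemma Q_neq_0 [simp]: "Q y \<noteq> 0"
  using Q_pos[of y] by simp

lemma has_real_derivative_Q:
  assumes "y \<noteq> 0"
  shows "(Q has_real_derivative A_theta y / y * Q y) (at y)"
proof -
  have "Q = (\<lambda>y. sqrt 8 * jbr_inv_sq y)"
    by (simp add: fun_eq_iff Q_def jbr_inv_sq_def)
  moreover have "sqrt 8 * (- 2 * (y\<^sup>2 / X\<^sup>2) / y) = - (2 * y\<^sup>2) / X / y * (sqrt 8 / X)" for X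
    using assms by (simp add: field_simps power2_eq_square)
  ultimately show ?thesis
    using DERIV_cmult[OF has_real_derivative_jbr_inv_sq[OF assms], of "sqrt 8"]
    by (simp add: jbr_inv_sq_mult_one_minus A_theta_def Q_def)
qed

lemma Q_sq_mult:
  assumes "s \<noteq> 0"
  shows "Q s * Q s * s = 8 * (jbr_inv_sq s * (1 - jbr_inv_sq s)) / s"
proof -
  have "sqrt 8 / X * (sqrt 8 / X) * s = 8 * (s\<^sup>2 / X\<^sup>2) / s" for X
    using assms by (simp add: field_simps power2_eq_square)
  then show ?thesis
    unfolding Q_def jbr_inv_sq_mult_one_minus .
qed

lemma test_functionE:
  assumes "test_function \<phi>"
  obtains b where "\<And>x. (\<phi> has_real_derivative deriv \<phi> x) (at x)" "continuous_on UNIV (deriv \<phi>)"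
    "\<And>y. b < y \<Longrightarrow> \<phi> y = 0" "\<And>y. b < y \<Longrightarrow> deriv \<phi> y = 0"
proof -
  obtain a b where "\<And>y. y \<notin> {a..b} \<Longrightarrow> \<phi> y = 0"
    using assms unfolding test_function_def by blast
  then have zero: "\<phi> y = 0" if "b < y" for y
    using that by auto
  have smooth2: "higher_diff_on 2 UNIV \<phi>"
    using assms unfolding test_function_def smooth_on_def by blast
  then have D: "(\<phi> has_real_derivative deriv \<phi> x) (at x)" for x
    by (simp add: numeral_2_eq_2 DERIV_deriv_iff_real_differentiable)
  have "frechet_derivative \<phi> (at x) 1 = deriv \<phi> x" for x
    using D[of x] by (metis frechet_derivative_at has_field_derivative_def mult_1_right)
  moreover have "higher_diff_on (Suc 0) UNIV (\<lambda>x. frechet_derivative \<phi> (at x) 1)"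
    using smooth2 by (simp add: numeral_2_eq_2)
  then have "continuous_on UNIV (\<lambda>x. frechet_derivative \<phi> (at x) 1)"
    using higher_diff_on_SucD[of 0 UNIV] by simp
  ultimately have "continuous_on UNIV (deriv \<phi>)"
    by simp
  moreover have "deriv \<phi> y = 0" if "b < y" for y
  proof -
    have "\<forall>\<^sub>F t in nhds y. \<phi> t = 0"
      using eventually_nhds_in_open[of "{b<..}" y] that zero by (auto elim!: eventually_mono)
    then show ?thesis by (simp add: deriv_cong_ev)
  qed
  ultimately show thesis using that D zero by blast
qed

lemma set_integral_Ioc_FTC:
  fixes f F g :: "real \<Rightarrow> real"
  assumes "c \<le> B"
    and eq: "\<And>y. indicator S y * g y = indicator {c<..B} y * f y"
    and cont: "continuous_on {c..B} f"
    and deriv: "\<And>y. c \<le> y \<Longrightarrow> y \<le> B \<Longrightarrow> (F has_real_derivative f y) (at y)"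
  shows "(LINT y:S|lborel. g y) = F B - F c"
proof -
  have "(LINT y:S|lborel. g y) = (LBINT y=c..B. f y)"
    using interval_integral_Ioc[OF \<open>c \<le> B\<close>, of f] eq unfolding set_lebesgue_integral_def by simp
  also have "\<dots> = F B - F c"
  proof (rule interval_integral_FTC_finite)
    show "continuous_on {min c B..max c B} f"
      using \<open>c \<le> B\<close> cont by simp
    fix x assume "min c B \<le> x" "x \<le> max c B"
    then show "(F has_vector_derivative f x) (at x within {min c B..max c B})"
      using deriv[of x] \<open>c \<le> B\<close>
      by (simp add: has_real_derivative_iff_has_vector_derivative has_vector_derivative_at_within)
  qed
  finally show ?thesis .
qed

lemma set_integral_Ioi_FTC:
  fixes f F g :: "real \<Rightarrow> real"
  assumes eq: "\<And>y. indicator S y * g y = indicator {c<..} y * f y"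
    and cont: "continuous_on {c..} f"
    and deriv: "\<And>y. c \<le> y \<Longrightarrow> (F has_real_derivative f y) (at y)"
    and F_zero: "\<And>y. b < y \<Longrightarrow> F y = 0" and f_zero: "\<And>y. b < y \<Longrightarrow> f y = 0"
  shows "(LINT y:S|lborel. g y) = - F c"
proof -
  define B where "B = max b c + 1"
  have "c \<le> B" "b < B" unfolding B_def by auto
  have "indicator S y * g y = indicator {c<..B} y * f y" for y
    using eq[of y] f_zero[of y] \<open>b < B\<close> by (cases "y \<le> B") (auto simp: indicator_def B_def)
  then have "(LINT y:S|lborel. g y) = F B - F c"
    by (rule set_integral_Ioc_FTC[OF \<open>c \<le> B\<close>]) (auto intro: continuous_on_subset[OF cont] deriv)
  then show ?thesis using F_zero[OF \<open>b < B\<close>] by simp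
qed

lemma loc_int_indic_pos_mult:
  assumes "continuous_on {0<..} h"
  shows "loc_int (\<lambda>y. indic_pos (y - y') * h y)"
  unfolding loc_int_def
proof (intro allI impI)
  fix a b :: real assume "0 < a"
  then have "set_integrable lborel {a..b} h"
    by (intro borel_integrable_atLeastAtMost' continuous_on_subset[OF assms]) auto
  then have "set_integrable lborel ({a..b} \<inter> {y'<..}) h"
    by (rule set_integrable_subset) auto
  moreover have "(\<lambda>y. indicator ({a..b} \<inter> {y'<..}) y *\<^sub>R h y)
      = (\<lambda>y. indicator {a..b} y *\<^sub>R (indic_pos (y - y') * h y))"
    by (auto simp: fun_eq_iff indicator_def indic_pos_def)
  ultimately show "set_integrable lborel {a..b} (\<lambda>y. indic_pos (y - y') * h y)"
    unfolding set_integrable_def by simp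
qed

lemma outgoing_green_indic_posI:
  assumes "\<And>y'. 0 < y' \<Longrightarrow> continuous_on {0<..} (\<lambda>y. G y y')"
    and "\<And>y' \<phi>. 0 < y' \<Longrightarrow> test_function \<phi> \<Longrightarrow> T (\<lambda>y. indic_pos (y - y') * G y y') \<phi> = \<phi> y'"
  shows "outgoing_green T (\<lambda>y y'. indic_pos (y - y') * G y y')"
  unfolding outgoing_green_def
  using assms loc_int_indic_pos_mult by (auto simp: indic_pos_def)

lemma continuous_on_Q: "continuous_on S Q"
  unfolding Q_def[abs_def] by (intro continuous_intros) simp

lemma iLQi_pair_green:
  assumes "0 < y'" "test_function \<phi>"
  shows "iLQi_pair (\<lambda>y. indic_pos (y - y') * (Q y / Q y')) \<phi> = \<phi> y'"
proof -
  obtain b where D: "\<And>x. (\<phi> has_real_derivative deriv \<phi> x) (at x)"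
    and "continuous_on UNIV (deriv \<phi>)" "\<And>y. b < y \<Longrightarrow> \<phi> y = 0" "\<And>y. b < y \<Longrightarrow> deriv \<phi> y = 0"
    using test_functionE[OF assms(2)] by blast
  have "continuous_on UNIV \<phi>"
    by (intro continuous_at_imp_continuous_on ballI DERIV_isCont[OF D])
  have "iLQi_pair (\<lambda>y. indic_pos (y - y') * (Q y / Q y')) \<phi> = - (- (Q y' * \<phi> y') / Q y')"
    unfolding iLQi_pair_def
  proof (rule set_integral_Ioi_FTC[where F = "\<lambda>y. - (Q y * \<phi> y) / Q y'" and b = b])
    fix y
    show "indicator {0<..} y * (indic_pos (y - y') * (Q y / Q y') * - deriv \<phi> y
          - A_theta y / y * (indic_pos (y - y') * (Q y / Q y')) * \<phi> y)
        = indicator {y'<..} y * (- (A_theta y / y * Q y * \<phi> y + deriv \<phi> y * Q y) / Q y')"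
      using assms(1) Q_pos[of y'] by (auto simp: indicator_def indic_pos_def field_simps)
  next
    show "continuous_on {y'..} (\<lambda>y. - (A_theta y / y * Q y * \<phi> y + deriv \<phi> y * Q y) / Q y')"
      unfolding A_theta_def using assms(1) Q_pos[of y']
      by (intro continuous_intros continuous_on_Q continuous_on_subset[OF \<open>continuous_on UNIV \<phi>\<close>]
          continuous_on_subset[OF \<open>continuous_on UNIV (deriv \<phi>)\<close>]) auto
  next
    fix y assume "y' \<le> y"
    then show "((\<lambda>y. - (Q y * \<phi> y) / Q y') has_real_derivative
        - (A_theta y / y * Q y * \<phi> y + deriv \<phi> y * Q y) / Q y') (at y)"
      using assms(1) by (auto intro!: derivative_eq_intros has_real_derivative_Q D simp: field_simps)
  qed (use \<open>\<And>y. b < y \<Longrightarrow> \<phi> y = 0\<close> \<open>\<And>y. b < y \<Longrightarrow> deriv \<phi> y = 0\<close> in auto)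
  also have "\<dots> = \<phi> y'"
    using Q_pos[of y'] by simp
  finally show ?thesis .
qed

lemma LQ_nonlocal_term_green:
  assumes "0 < y'" "0 < y"
  shows "(LINT s:{0<..y}|lborel. Q s * (indic_pos (s - y') * (Q s / Q y' * green_I s y')) * s)
       = (if y' < y then - green_J y y' / Q y' else 0)"
proof (cases "y' < y")
  case True
  have "(LINT s:{0<..y}|lborel. Q s * (indic_pos (s - y') * (Q s / Q y' * green_I s y')) * s)
      = - green_J y y' / Q y' - (- green_J y' y' / Q y')"
  proof (rule set_integral_Ioc_FTC[where F = "\<lambda>s. - green_J s y' / Q y'" and c = y' and B = y
        and f = "\<lambda>s. Q s * (Q s / Q y' * green_I s y') * s"])
    show "continuous_on {y'..y} (\<lambda>s. Q s * (Q s / Q y' * green_I s y') * s)"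
      using assms(1)
      by (intro continuous_intros continuous_on_Q continuous_at_imp_continuous_on ballI
          DERIV_isCont[OF has_real_derivative_green_I]) auto
  next
    fix s assume "y' \<le> s" "s \<le> y"
    then have "s \<noteq> 0" "0 < s" using assms by auto
    have "((\<lambda>s. - green_J s y' / Q y') has_real_derivative
        - (- 8 * (jbr_inv_sq s * (1 - jbr_inv_sq s)) * green_I s y' / s) / Q y') (at s)"
      using has_real_derivative_green_J[OF \<open>0 < s\<close>] by (auto intro!: derivative_eq_intros)
    moreover have "Q s * (Q s / Q y' * green_I s y') * s = (Q s * Q s * s) * green_I s y' / Q y'"
      by simp
    ultimately show "((\<lambda>s. - green_J s y' / Q y') has_real_derivative
        Q s * (Q s / Q y' * green_I s y') * s) (at s)"
      unfolding Q_sq_mult[OF \<open>s \<noteq> 0\<close>] by simp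
  qed (use True assms in \<open>auto simp: indicator_def indic_pos_def\<close>)
  then show ?thesis using True by (simp add: green_J_diag)
next
  case False
  then have "(\<lambda>s. indicator {0<..y} s *\<^sub>R (Q s * (indic_pos (s - y') * (Q s / Q y' * green_I s y')) * s))
      = (\<lambda>s. 0)"
    by (auto simp: fun_eq_iff indicator_def indic_pos_def)
  then show ?thesis
    using False unfolding set_lebesgue_integral_def by simp
qed

lemma LQ_pair_green:
  assumes "0 < y'" "test_function \<phi>"
  shows "LQ_pair (\<lambda>y. indic_pos (y - y') * (Q y / Q y' * green_I y y')) \<phi> = \<phi> y'"
proof -
  obtain b where D: "\<And>x. (\<phi> has_real_derivative deriv \<phi> x) (at x)"
    and "continuous_on UNIV (deriv \<phi>)" "\<And>y. b < y \<Longrightarrow> \<phi> y = 0" "\<And>y. b < y \<Longrightarrow> deriv \<phi> y = 0"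
    using test_functionE[OF assms(2)] by blast
  have "continuous_on UNIV \<phi>"
    by (intro continuous_at_imp_continuous_on ballI DERIV_isCont[OF D])
  define f where "f y = - (((A_theta y / y * Q y) * green_I y y' + (green_J y y' / y) * Q y) * \<phi> y
      + deriv \<phi> y * (Q y * green_I y y')) / Q y'" for y
  have "LQ_pair (\<lambda>y. indic_pos (y - y') * (Q y / Q y' * green_I y y')) \<phi>
      = - (- (Q y' * green_I y' y' * \<phi> y') / Q y')"
    unfolding LQ_pair_def
  proof (rule set_integral_Ioi_FTC[where F = "\<lambda>y. - (Q y * green_I y y' * \<phi> y) / Q y'" and f = f and b = b])
    fix y
    show "indicator {0<..} y *
        (indic_pos (y - y') * (Q y / Q y' * green_I y y') * - deriv \<phi> y
         - A_theta y / y * (indic_pos (y - y') * (Q y / Q y' * green_I y y')) * \<phi> y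
         + Q y / y * \<phi> y * (LINT s:{0<..y}|lborel. Q s * (indic_pos (s - y') * (Q s / Q y' * green_I s y')) * s))
      = indicator {y'<..} y * f y"
      using assms(1) LQ_nonlocal_term_green[OF assms(1), of y]
      by (auto simp: indicator_def indic_pos_def f_def field_simps)
  next
    show "continuous_on {y'..} f"
      unfolding f_def A_theta_def using assms(1)
      by (intro continuous_intros continuous_on_Q continuous_on_subset[OF \<open>continuous_on UNIV \<phi>\<close>]
          continuous_on_subset[OF \<open>continuous_on UNIV (deriv \<phi>)\<close>] continuous_at_imp_continuous_on ballI
          DERIV_isCont[OF has_real_derivative_green_I] DERIV_isCont[OF has_real_derivative_green_J]) auto
  next
    fix y assume "y' \<le> y"
    then show "((\<lambda>y. - (Q y * green_I y y' * \<phi> y) / Q y') has_real_derivative f y) (at y)"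
      unfolding f_def using assms(1)
      by (intro DERIV_cdivide DERIV_mult has_real_derivative_Q has_real_derivative_green_I D
          Deriv.field_differentiable_minus) auto
  qed (use \<open>\<And>y. b < y \<Longrightarrow> \<phi> y = 0\<close> \<open>\<And>y. b < y \<Longrightarrow> deriv \<phi> y = 0\<close> in \<open>auto simp: f_def\<close>)
  also have "\<dots> = \<phi> y'"
    by (simp add: green_I_diag)
  finally show ?thesis .
qed

lemma outgoing_green_iLQi_pair: "outgoing_green iLQi_pair (\<lambda>y y'. indic_pos (y - y') * Q y / Q y')"
  using outgoing_green_indic_posI[of "\<lambda>y y'. Q y / Q y'" iLQi_pair] iLQi_pair_green
  by (simp add: continuous_on_Q continuous_on_divide)

lemma outgoing_green_LQ_pair:
  "outgoing_green LQ_pair (\<lambda>y y'. indic_pos (y - y') * Q y / Q y' * green_I y y')"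
proof -
  have "continuous_on {0<..} (\<lambda>y. Q y / Q y' * green_I y y')" for y'
    by (intro continuous_intros continuous_on_Q continuous_at_imp_continuous_on ballI
        DERIV_isCont[OF has_real_derivative_green_I]) auto
  then show ?thesis
    using outgoing_green_indic_posI[of "\<lambda>y y'. Q y / Q y' * green_I y y'" LQ_pair] LQ_pair_green
    by (simp add: mult.assoc)
qed

theorem proposition3p4:
  shows "\<exists>I :: real \<Rightarrow> real \<Rightarrow> real.
    smooth_on {p :: real \<times> real. 0 < snd p \<and> snd p < fst p} (\<lambda>p. I (fst p) (snd p))
  \<and> outgoing_green LQ_pair (\<lambda>y y'. indic_pos (y - y') * Q y / Q y' * I y y')
  \<and> outgoing_green iLQi_pair (\<lambda>y y'. indic_pos (y - y') * Q y / Q y')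
  \<and> (\<exists>C. \<forall>y y'. 0 < y' \<and> y' < y \<longrightarrow>
        \<bar>I y y'\<bar> \<le> C * (1 + 1 / (jbr y')\<^sup>2 * ln (2 + jbr y / jbr y')))
  \<and> (\<exists>C. \<forall>y y'. 0 < y' \<and> y' < y \<longrightarrow>
        \<bar>ydy I y y'\<bar> \<le> C * ((y - y') / y) * min (y\<^sup>2 / (jbr y)\<^sup>2) (1 / (jbr y')\<^sup>2))
  \<and> (\<forall>k::nat. k \<ge> 2 \<longrightarrow> (\<exists>C. \<forall>y y'. 0 < y' \<and> y' < y \<longrightarrow>
        \<bar>(ydy ^^ k) I y y'\<bar> \<le> C * (y\<^sup>2 / (1 + y ^ 4)) * (1 + 1 / (jbr y')\<^sup>2 * ln (2 + jbr y / jbr y'))))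
  \<and> (\<forall>\<epsilon>>0. \<exists>\<delta>>0. \<forall>y y'. 0 < y' \<and> y' < y \<and> y - y' < \<delta> \<longrightarrow> \<bar>I y y' - 1\<bar> < \<epsilon>)
  \<and> (\<forall>\<epsilon>>0. \<exists>\<delta>>0. \<forall>y y'. 0 < y' \<and> y' < y \<and> y - y' < \<delta> \<longrightarrow> \<bar>ydy I y y'\<bar> < \<epsilon>)
  \<and> (\<forall>k::nat. k \<ge> 2 \<longrightarrow>
        (\<forall>y>0. ((\<lambda>y'. (ydy ^^ k) I y y') \<longlongrightarrow> I_diag I k y) (at_left y))
      \<and> (\<forall>j y. 0 < y \<longrightarrow> (deriv ^^ j) (I_diag I k) differentiable (at y))
      \<and> (\<forall>l. \<exists>C. \<forall>y>0. seminorm_l l (I_diag I k) y \<le> C * (y\<^sup>2 / (1 + y ^ 4))))"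
proof (intro exI[of _ green_I] conjI allI impI)
  show "\<exists>C. \<forall>y y'. 0 < y' \<and> y' < y \<longrightarrow>
      \<bar>green_I y y'\<bar> \<le> C * (1 + 1 / (jbr y')\<^sup>2 * ln (2 + jbr y / jbr y'))"
    using abs_green_I_le by blast
  show "\<exists>C. \<forall>y y'. 0 < y' \<and> y' < y \<longrightarrow>
      \<bar>ydy green_I y y'\<bar> \<le> C * ((y - y') / y) * min (y\<^sup>2 / (jbr y)\<^sup>2) (1 / (jbr y')\<^sup>2)"
    using abs_ydy_green_I_le by blast
  fix k :: nat assume "2 \<le> k"
  then show "\<exists>C. \<forall>y y'. 0 < y' \<and> y' < y \<longrightarrow>
      \<bar>(ydy ^^ k) green_I y y'\<bar> \<le> C * (y\<^sup>2 / (1 + y ^ 4)) * (1 + 1 / (jbr y')\<^sup>2 * ln (2 + jbr y / jbr y'))"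
    by (rule abs_ydy_power_green_I_le)
  show "((\<lambda>y'. (ydy ^^ k) green_I y y') \<longlongrightarrow> I_diag green_I k y) (at_left y)" if "0 < y" for y
    using tendsto_ydy_power_green_I_diag I_diag_green_I that by simp
  show "(deriv ^^ j) (I_diag green_I k) differentiable (at y)" if "0 < y" for j y
    using higher_deriv_poly_jbr_inv_sq_differentiable[OF I_diag_green_I that] .
  show "\<exists>C. \<forall>y>0. seminorm_l l (I_diag green_I k) y \<le> C * (y\<^sup>2 / (1 + y ^ 4))" for l
    using seminorm_l_I_diag_green_I_le[OF \<open>2 \<le> k\<close>] .
qed (use smooth_on_green_I outgoing_green_LQ_pair outgoing_green_iLQi_pair
    green_I_near_diag ydy_green_I_near_diag in blast)+

end
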